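(* For integers $i,j\ge1$, the central element $m_{i+j,i}=m_{(i+j,i)}(L_1,\dots,L_4)\in\mathbb Z S_4$ satisfies \begin{align*} \langle 1,m_{i+j,i}\rangle&=\tfrac{1}{24}(1+(-1)^j)\big(6^i3^j+6^i2^j+3^{i+j}+3^i+(10+9(-1)^i)(2^{i+j}+2^i)+22(-1)^i\big),\\ \langle s_1,m_{i+j,i}\rangle&=\tfrac{1}{24}(1-(-1)^j)\big(3^j6^i+2^j6^i+3^{i+j}+3^i+(4+3(-1)^i)2^{i+j}+(4-3(-1)^i)2^i\big),\\ \langle s_{12},m_{i+j,i}\rangle&=\tfrac{1}{24}(1+(-1)^j)\big(3^j6^i+2^j6^i+3^{i+j}+3^i+2^{i+j}+2^i-2(-1)^i\big),\\ \langle s_{13},m_{i+j,i}\rangle&=\tfrac{1}{24}(1+(-1)^j)\big(3^j6^i+2^j6^i+3^{i+j}+3^i-(2+3(-1)^i)(2^i+2^{i+j})-2(-1)^i\big),\\ \langle s_{123},m_{i+j,i}\rangle&=\tfrac{1}{24}(1-(-1)^j)\big(3^j6^i+2^j6^i+3^i+3^{i+j}+3(-1)^i(2^i-2^{i+j})-2(2^i+2^{i+j})\big). \end{align*}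
   Context: $S_4$ is the symmetric group on $\{1,2,3,4\}$, $\mathbb Z S_4$ its integral group ring. Let $s_1=(1\,2)$, $s_2=(2\,3)$, $s_3=(3\,4)$, $s_{12}=s_1s_2$, $s_{13}=s_1s_3$, $s_{123}=s_1s_2s_3$. The Jucys–Murphy elements are $L_1=0$ and $L_i=\sum_{k=1}^{i-1}(k\ i)$ for $i=2,3,4$; they pairwise commute. For a partition $\mu=(\mu_1,\dots,\mu_r)$, $m_\mu(x_1,\dots,x_4)$ is the monomial symmetric polynomial: the sum of all distinct monomials $x_1^{\alpha_1}\cdots x_4^{\alpha_4}$ with $(\alpha_1,\dots,\alpha_4)$ a rearrangement of $(\mu_1,\dots,\mu_r,0,\dots,0)$. For $w\in S_4$ and $h\in\mathbb Z S_4$, $\langle w,h\rangle$ denotes the coefficient of $w$ in $h$; for central $h$ this equals the coefficient of the class sum of the conjugacy class of $w$. *)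

theory Defs
  imports "HOL-Combinatorics.Combinatorics" Complex_Main
begin

text \<open>The integral group ring Z S_4, elements represented as integer-valued
  functions on permutations of {1..4} (coefficient functions).\<close>

definition S4 :: "(nat \<Rightarrow> nat) set" where
  "S4 = {p. p permutes {1..4}}"

type_synonym grpring = "(nat \<Rightarrow> nat) \<Rightarrow> int"

definition gdelta :: "(nat \<Rightarrow> nat) \<Rightarrow> grpring" where
  "gdelta w = (\<lambda>v. if v = w then 1 else 0)"

text \<open>Multiplication: the product of basis elements u and v is u \<circ> v.\<close>
definition gmul :: "grpring \<Rightarrow> grpring \<Rightarrow> grpring" where
  "gmul f g = (\<lambda>w. \<Sum>u\<in>S4. f u * g (inv u \<circ> w))"

primrec gpow :: "grpring \<Rightarrow> nat \<Rightarrow> grpring" where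
  "gpow f 0 = gdelta id"
| "gpow f (Suc n) = gmul f (gpow f n)"

definition JM :: "nat \<Rightarrow> grpring" where
  "JM i = (\<lambda>w. \<Sum>k\<in>{1..<i}. gdelta (transpose k i) w)"

definition JM_monomial :: "(nat \<Rightarrow> nat) \<Rightarrow> grpring" where
  "JM_monomial a = foldr (\<lambda>k acc. gmul (gpow (JM k) (a k)) acc) [1,2,3,4] (gdelta id)"

definition pad4 :: "nat list \<Rightarrow> nat \<Rightarrow> nat" where
  "pad4 mu k = (if 1 \<le> k \<and> k \<le> length mu then mu ! (k - 1) else 0)"

definition rearrangements :: "nat list \<Rightarrow> (nat \<Rightarrow> nat) set" where
  "rearrangements mu = {a. \<exists>\<sigma>. \<sigma> permutes {1..4} \<and>
      (\<forall>k. a k = (if k \<in> {1..4} then pad4 mu (\<sigma> k) else 0))}"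

definition m_JM :: "nat list \<Rightarrow> grpring" where
  "m_JM mu = (\<lambda>w. \<Sum>a\<in>rearrangements mu. JM_monomial a w)"

definition s1 :: "nat \<Rightarrow> nat" where "s1 = transpose 1 2"
definition s2 :: "nat \<Rightarrow> nat" where "s2 = transpose 2 3"
definition s3 :: "nat \<Rightarrow> nat" where "s3 = transpose 3 4"

end

theory Submission
  imports Defs
begin

(* The coefficients of m_(p,q)(L_1,...,L_4) in Z S_4 are computed by diagonalising the
   Jucys-Murphy elements.  For each of the ten standard Young tableaux t of size 4 there is an
   element E_t of Q S_4 (the primitive idempotent of Young's seminormal form) such that
     (a) the E_t sum to the identity, and
     (b) L_k E_t = c_t(k) E_t, where c_t(k) is the content of the box containing k in t.
   Consequently every monomial L^a acts on the identity as  L^a = sum_t (prod_k c_t(k)^(a k)) E_t,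
   and summing over the rearrangements of (p,q,0,0) gives
     m_(p,q)(L) = sum_t m_(p,q)(c_t) E_t,
   so a coefficient <w, m_(p,q)(L)> is a finite combination of the numbers m_(p,q)(c_t) with
   the coefficients E_t(w).  Evaluating at p = i + j, q = i yields the five closed forms. *)

(* The real group algebra of Sym(A): functions on permutations of A, multiplied by convolution.
   It is the home of the computation since the idempotents E_t have rational coefficients. *)
definition perms :: "'a set \<Rightarrow> ('a \<Rightarrow> 'a) set" where
  "perms A = {p. p permutes A}"

definition conv :: "'a set \<Rightarrow> (('a \<Rightarrow> 'a) \<Rightarrow> real) \<Rightarrow> (('a \<Rightarrow> 'a) \<Rightarrow> real) \<Rightarrow> ('a \<Rightarrow> 'a) \<Rightarrow> real" where
  "conv A f g = (\<lambda>w. \<Sum>u\<in>perms A. f u * g (inv u \<circ> w))"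

definition unit_at :: "('a \<Rightarrow> 'a) \<Rightarrow> ('a \<Rightarrow> 'a) \<Rightarrow> real" where
  "unit_at p = (\<lambda>v. if v = p then 1 else 0)"

primrec conv_pow :: "'a set \<Rightarrow> (('a \<Rightarrow> 'a) \<Rightarrow> real) \<Rightarrow> nat \<Rightarrow> ('a \<Rightarrow> 'a) \<Rightarrow> real" where
  "conv_pow A f 0 = unit_at id"
| "conv_pow A f (Suc n) = conv A f (conv_pow A f n)"

lemma perms_closed:
  assumes "p \<in> perms A" "q \<in> perms A"
  shows "id \<in> perms A" "p \<circ> q \<in> perms A" "inv p \<in> perms A"
  using assms by (auto simp: perms_def permutes_compose permutes_inv)

(* Cancellation laws, also in the left-associated form that the simplifier produces. *)
lemma perms_cancel:
  assumes "p \<in> perms A"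
  shows "p \<circ> inv p = id" "inv p \<circ> p = id" "x \<circ> p \<circ> inv p = x" "x \<circ> inv p \<circ> p = x"
  using permutes_inv_o[of p A] assms by (simp_all add: perms_def flip: o_assoc)

lemma conv_unit_left:
  assumes "finite A" "p \<in> perms A"
  shows "conv A (unit_at p) g w = g (inv p \<circ> w)"
proof -
  have "conv A (unit_at p) g w = (\<Sum>u\<in>perms A. if u = p then g (inv u \<circ> w) else 0)"
    unfolding conv_def unit_at_def by (intro sum.cong) auto
  also have "\<dots> = g (inv p \<circ> w)"
    using assms by (simp add: perms_def finite_permutations sum.delta')
  finally show ?thesis .
qed

lemma conv_assoc: "conv A (conv A f g) h w = conv A f (conv A g h) w"
proof -
  have "conv A (conv A f g) h w = (\<Sum>v\<in>perms A. \<Sum>u\<in>perms A. f v * (g (inv v \<circ> u) * h (inv u \<circ> w)))"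
    unfolding conv_def sum_distrib_right by (subst sum.swap) (simp add: mult.assoc)
  also have "\<dots> = (\<Sum>v\<in>perms A. f v * (\<Sum>u\<in>perms A. g u * h (inv u \<circ> (inv v \<circ> w))))"
  proof (rule sum.cong[OF refl])
    fix v assume v: "v \<in> perms A"
    have inv_comp: "inv (inv v \<circ> u) = inv u \<circ> v" if "u \<in> perms A" for u
    proof -
      have "bij u" "bij (inv v)" "inv (inv v) = v"
        using v that by (simp_all add: perms_def permutes_bij permutes_inv_inv bij_imp_bij_inv)
      then show ?thesis by (simp add: o_inv_distrib)
    qed
    have closed: "inv v \<circ> u \<in> perms A" "v \<circ> u \<in> perms A" if "u \<in> perms A" for u
      using perms_closed[OF perms_closed(3)[OF v] that] perms_closed[OF v that] by auto
    have "(\<Sum>u\<in>perms A. g (inv v \<circ> u) * h (inv u \<circ> w)) = (\<Sum>u\<in>perms A. g u * h (inv u \<circ> (inv v \<circ> w)))"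
      by (rule sum.reindex_bij_witness[where i = "\<lambda>u. v \<circ> u" and j = "\<lambda>u. inv v \<circ> u"])
        (simp_all add: closed inv_comp o_assoc perms_cancel[OF v])
    then show "(\<Sum>u\<in>perms A. f v * (g (inv v \<circ> u) * h (inv u \<circ> w))) = f v * (\<Sum>u\<in>perms A. g u * h (inv u \<circ> (inv v \<circ> w)))"
      by (simp only: sum_distrib_left[symmetric])
  qed
  also have "\<dots> = conv A f (conv A g h) w"
    unfolding conv_def by (simp add: o_assoc)
  finally show ?thesis .
qed

lemma conv_cong_right:
  assumes "\<And>v. v \<in> perms A \<Longrightarrow> g v = g' v" "w \<in> perms A"
  shows "conv A f g w = conv A f g' w"
  unfolding conv_def using assms by (intro sum.cong) (auto intro: perms_closed)

lemma conv_sum_left: "conv A (\<lambda>u. \<Sum>m\<in>M. F m u) g w = (\<Sum>m\<in>M. conv A (F m) g w)"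
  unfolding conv_def by (simp add: sum_distrib_right sum.swap[of _ "perms A"])

lemma conv_lincomb_right:
  "conv A f (\<lambda>v. \<Sum>t\<in>T. d t * G t v) w = (\<Sum>t\<in>T. d t * conv A f (G t) w)"
  unfolding conv_def by (simp add: sum_distrib_left sum_distrib_right mult_ac sum.swap[of _ "perms A"])

lemma conv_pow_eigen:
  assumes "finite A" and eigen: "\<And>v. v \<in> perms A \<Longrightarrow> conv A L E v = c * E v"
    and "w \<in> perms A"
  shows "conv A (conv_pow A L n) E w = c ^ n * E w"
  using assms(3)
proof (induction n arbitrary: w)
  case 0
  then show ?case using assms(1) by (simp add: conv_unit_left perms_closed)
next
  case (Suc n)
  have "conv A (conv_pow A L (Suc n)) E w = conv A L (conv A (conv_pow A L n) E) w"
    by (simp add: conv_assoc)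
  also have "\<dots> = conv A L (\<lambda>v. c ^ n * E v) w"
    by (rule conv_cong_right[OF Suc.IH Suc.prems])
  also have "\<dots> = c ^ n * (c * E w)"
    using conv_lincomb_right[where T = "{()}" and d = "\<lambda>_. c ^ n" and G = "\<lambda>_. E"] eigen[OF Suc.prems] by simp
  finally show ?case by simp
qed

definition to_real :: "grpring \<Rightarrow> (nat \<Rightarrow> nat) \<Rightarrow> real" where
  "to_real f = (\<lambda>w. real_of_int (f w))"

lemma S4_perms: "S4 = perms {1..4}"
  by (simp add: S4_def perms_def)

lemma to_real_gmul: "to_real (gmul f g) = conv {1..4} (to_real f) (to_real g)"
  by (simp add: fun_eq_iff to_real_def gmul_def conv_def S4_perms)

lemma to_real_gdelta: "to_real (gdelta p) = unit_at p"
  by (simp add: fun_eq_iff to_real_def gdelta_def unit_at_def)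

lemma to_real_gpow: "to_real (gpow f n) = conv_pow {1..4} (to_real f) n"
  by (induction n) (simp_all add: to_real_gmul to_real_gdelta)

lemma to_real_JM: "to_real (JM k) = (\<lambda>u. \<Sum>m\<in>{1..<k}. unit_at (transpose m k) u)"
  by (auto simp: fun_eq_iff to_real_def JM_def gdelta_def unit_at_def of_int_sum intro!: sum.cong)

definition one_line_S4 :: "nat list list" where
  "one_line_S4 =
    [[1,2,3,4], [1,2,4,3], [1,3,2,4], [1,3,4,2], [1,4,2,3], [1,4,3,2],
     [2,1,3,4], [2,1,4,3], [2,3,1,4], [2,3,4,1], [2,4,1,3], [2,4,3,1],
     [3,1,2,4], [3,1,4,2], [3,2,1,4], [3,2,4,1], [3,4,1,2], [3,4,2,1],
     [4,1,2,3], [4,1,3,2], [4,2,1,3], [4,2,3,1], [4,3,1,2], [4,3,2,1]]"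

(* Row t lists 48 E_t(w) for w in the order of one_line_S4; the rows belong to the ten standard
   tableaux, from the single column (sign) to the single row (trivial). *)
definition idempotent_table :: "int list list" where
  "idempotent_table =
    [[2,-2,-2,2,2,-2,-2,2,2,-2,-2,2,2,-2,-2,2,2,-2,-2,2,2,-2,-2,2],
     [6,2,-6,-2,-2,2,-6,-2,6,2,2,-2,6,2,-6,-2,-2,2,2,-2,-2,2,2,-2],
     [6,-2,3,-1,-1,-5,-6,2,-3,1,1,5,-3,1,3,-1,-4,4,1,5,-1,-5,4,-4],
     [4,-4,2,-2,-2,2,-4,4,-2,2,2,-2,-2,2,2,-2,4,-4,2,-2,-2,2,-4,4],
     [6,6,3,3,3,3,-6,-6,-3,-3,-3,-3,-3,-3,3,3,0,0,-3,-3,3,3,0,0],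
     [6,-6,-3,3,3,-3,6,-6,-3,3,3,-3,-3,3,-3,3,0,0,3,-3,3,-3,0,0],
     [4,4,-2,-2,-2,-2,4,4,-2,-2,-2,-2,-2,-2,-2,-2,4,4,-2,-2,-2,-2,4,4],
     [6,2,-3,-1,-1,5,6,2,-3,-1,-1,5,-3,-1,-3,-1,-4,-4,-1,5,-1,5,-4,-4],
     [6,-2,6,-2,-2,-2,6,-2,6,-2,-2,-2,6,-2,6,-2,-2,-2,-2,-2,-2,-2,-2,-2],
     [2,2,2,2,2,2,2,2,2,2,2,2,2,2,2,2,2,2,2,2,2,2,2,2]]"

(* Row t lists the contents c_t(1), ..., c_t(4) of the boxes containing 1, ..., 4 in tableau t. *)
definition content_table :: "int list list" where
  "content_table =
    [[0,-1,-2,-3], [0,-1,-2,1], [0,-1,1,-2], [0,-1,1,0], [0,-1,1,2],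
     [0,1,-1,-2], [0,1,-1,0], [0,1,-1,2], [0,1,2,-1], [0,1,2,3]]"

definition entry_at :: "int list \<Rightarrow> nat list \<Rightarrow> int" where
  "entry_at V l = sum_list (map2 (\<lambda>l' v. if l' = l then v else 0) one_line_S4 V)"

lemma idempotents_sum_to_unit:
  "list_all (\<lambda>l. (\<Sum>t\<leftarrow>[0..<10]. entry_at (idempotent_table ! t) l) = (if l = [1,2,3,4] then 48 else 0))
     one_line_S4"
  by code_simp

lemma idempotents_eigen:
  "list_all (\<lambda>t. list_all (\<lambda>k. list_all (\<lambda>l.
     (\<Sum>m\<leftarrow>[1..<k]. entry_at (idempotent_table ! t) (map (transpose m k) l))
       = content_table ! t ! (k - 1) * entry_at (idempotent_table ! t) l) one_line_S4) [2,3,4]) [0..<10]"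
  by code_simp

(* The box containing 1 is the corner box, of content 0; this gives (b) for L_1 = 0. *)
lemma content_table_first_zero: "list_all (\<lambda>t. content_table ! t ! 0 = 0) [0..<10]"
  by code_simp

definition idem :: "nat \<Rightarrow> (nat \<Rightarrow> nat) \<Rightarrow> real" where
  "idem t w = real_of_int (entry_at (idempotent_table ! t) (map w [1,2,3,4])) / 48"

definition content :: "nat \<Rightarrow> nat \<Rightarrow> real" where
  "content t k = real_of_int (content_table ! t ! (k - 1))"

lemma distinct_quadruple_in_one_line:
  assumes "a \<in> {1, 2, 3, 4}" "b \<in> {1, 2, 3, 4}" "c \<in> {1, 2, 3, 4}" "d \<in> {1, 2, 3, 4}"
    and "distinct [a, b, c, d]"
  shows "[a, b, c, d] \<in> set one_line_S4"
  using assms unfolding insert_iff empty_iff by (elim disjE; simp add: one_line_S4_def)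

lemma one_line_mem:
  assumes "w \<in> S4"
  shows "map w [1,2,3,4] \<in> set one_line_S4"
proof -
  have w: "w permutes {1..4}" using assms by (simp add: S4_def)
  have range: "w x \<in> {1, 2, 3, 4}" if "x \<in> {1..4}" for x
  proof -
    have "w x \<in> {1..4}" using permutes_in_image[OF w] that by simp
    then show ?thesis by auto
  qed
  have "distinct [w 1, w 2, w 3, w 4]"
    using permutes_inj[OF w] by (simp add: inj_eq)
  then have "[w 1, w 2, w 3, w 4] \<in> set one_line_S4"
    by (intro distinct_quadruple_in_one_line range) auto
  then show ?thesis by simp
qed

lemma one_line_eq_id:
  assumes "w \<in> S4"
  shows "map w [1,2,3,4] = [1,2,3,4] \<longleftrightarrow> w = id"
proof
  assume fix4: "map w [1,2,3,4] = [1,2,3,4]"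
  have "w x = x" for x
  proof (cases "x \<in> {1..4}")
    case True
    then have "x \<in> {1, 2, 3, 4}" by auto
    then show ?thesis using fix4 by auto
  next
    case False
    then show ?thesis using assms permutes_not_in[of w "{1..4}" x] by (simp add: S4_def)
  qed
  then show "w = id" by (simp add: fun_eq_iff)
qed simp

lemma idem_sum_unit:
  assumes w: "w \<in> S4"
  shows "(\<Sum>t<10. idem t w) = unit_at id w"
proof -
  define l where "l = map w [1,2,3,4]"
  have "(\<Sum>t<10. entry_at (idempotent_table ! t) l) = (if l = [1,2,3,4] then 48 else 0)"
    using idempotents_sum_to_unit one_line_mem[OF w] by (simp add: list_all_iff l_def interv_sum_list_conv_sum_set_nat atLeast0LessThan)
  then have "(\<Sum>t<10. idem t w) = (if l = [1,2,3,4] then 1 else 0)"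
    unfolding idem_def l_def[symmetric] sum_divide_distrib[symmetric] of_int_sum[symmetric] by simp
  then show ?thesis
    using one_line_eq_id[OF w] by (simp add: l_def unit_at_def)
qed

lemma JM_eigen:
  assumes t: "t < 10" and k: "k \<in> {1..4}" and w: "w \<in> S4"
  shows "conv {1..4} (to_real (JM k)) (idem t) w = content t k * idem t w"
proof -
  define l where "l = map w [1,2,3,4]"
  have "conv {1..4} (to_real (JM k)) (idem t) w = (\<Sum>m\<in>{1..<k}. idem t (transpose m k \<circ> w))"
    unfolding to_real_JM conv_sum_left using k
    by (intro sum.cong refl) (auto simp: conv_unit_left perms_def permutes_swap_id)
  also have "\<dots> = real_of_int (\<Sum>m\<in>{1..<k}. entry_at (idempotent_table ! t) (map (transpose m k) l)) / 48"
    by (simp add: idem_def l_def of_int_sum sum_divide_distrib)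
  also have "\<dots> = content t k * idem t w"
  proof (cases "k = 1")
    case True
    then show ?thesis using content_table_first_zero t by (simp add: list_all_iff content_def)
  next
    case False
    then have "k \<in> set [2,3,4]" using k by auto
    moreover have "\<forall>t\<in>set [0..<10]. \<forall>k\<in>set [2,3,4]. \<forall>l\<in>set one_line_S4.
        (\<Sum>m\<leftarrow>[1..<k]. entry_at (idempotent_table ! t) (map (transpose m k) l))
          = content_table ! t ! (k - 1) * entry_at (idempotent_table ! t) l"
      using idempotents_eigen by (simp only: list_all_iff)
    ultimately have "(\<Sum>m\<leftarrow>[1..<k]. entry_at (idempotent_table ! t) (map (transpose m k) l))
        = content_table ! t ! (k - 1) * entry_at (idempotent_table ! t) l"
      using one_line_mem[OF w] t unfolding l_def by (metis atLeastLessThan_iff set_upt zero_le)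
    then show ?thesis
      by (simp add: content_def idem_def l_def sum_set_upt_conv_sum_list_nat[symmetric])
  qed
  finally show ?thesis .
qed

lemma JM_pow_expansion:
  assumes k: "k \<in> {1..4}" and X: "\<And>v. v \<in> S4 \<Longrightarrow> X v = (\<Sum>t<10. d t * idem t v)"
    and w: "w \<in> S4"
  shows "conv {1..4} (conv_pow {1..4} (to_real (JM k)) n) X w = (\<Sum>t<10. d t * content t k ^ n * idem t w)"
proof -
  let ?L = "conv_pow {1..4} (to_real (JM k)) n"
  have "conv {1..4} ?L X w = conv {1..4} ?L (\<lambda>v. \<Sum>t<10. d t * idem t v) w"
    using X w by (intro conv_cong_right) (auto simp: S4_perms)
  also have "\<dots> = (\<Sum>t<10. d t * conv {1..4} ?L (idem t) w)"
    by (rule conv_lincomb_right)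
  also have "\<dots> = (\<Sum>t<10. d t * content t k ^ n * idem t w)"
    using JM_eigen[OF _ k] w
    by (intro sum.cong refl) (simp add: conv_pow_eigen S4_perms)
  finally show ?thesis .
qed

lemma JM_word_expansion:
  assumes "set ks \<subseteq> {1..4}" and "w \<in> S4"
  shows "to_real (foldr (\<lambda>k acc. gmul (gpow (JM k) (a k)) acc) ks (gdelta id)) w
    = (\<Sum>t<10. (\<Prod>k\<leftarrow>ks. content t k ^ a k) * idem t w)"
  using assms
proof (induction ks arbitrary: w)
  case Nil
  then show ?case by (simp add: to_real_gdelta idem_sum_unit id_def)
next
  case (Cons k ks)
  have IH: "\<And>v. v \<in> S4 \<Longrightarrow> to_real (foldr (\<lambda>k acc. gmul (gpow (JM k) (a k)) acc) ks (gdelta id)) v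
      = (\<Sum>t<10. (\<Prod>k\<leftarrow>ks. content t k ^ a k) * idem t v)"
    using Cons.IH Cons.prems(1) by (simp add: id_def)
  have "to_real (foldr (\<lambda>k acc. gmul (gpow (JM k) (a k)) acc) (k # ks) (gdelta id)) w
      = (\<Sum>t<10. (\<Prod>k\<leftarrow>ks. content t k ^ a k) * content t k ^ a k * idem t w)"
    unfolding foldr_Cons o_apply to_real_gmul to_real_gpow
    using Cons.prems by (intro JM_pow_expansion[OF _ IH]) auto
  then show ?case by (simp add: mult_ac id_def)
qed

lemma JM_monomial_expansion:
  assumes "w \<in> S4"
  shows "to_real (JM_monomial a) w = (\<Sum>t<10. (\<Prod>k\<in>{1..4}. content t k ^ a k) * idem t w)"
proof -
  have four: "{1..4::nat} = {1, 2, 3, 4}" by auto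
  have list_to_set: "(\<Prod>k\<leftarrow>[1,2,3,4]. content t k ^ a k) = (\<Prod>k\<in>{1..4}. content t k ^ a k)" for t
    unfolding four by simp
  have "to_real (JM_monomial a) w = (\<Sum>t<10. (\<Prod>k\<leftarrow>[1,2,3,4]. content t k ^ a k) * idem t w)"
    unfolding JM_monomial_def by (rule JM_word_expansion) (use assms in auto)
  then show ?thesis by (simp only: list_to_set)
qed

definition placement :: "nat \<Rightarrow> nat \<Rightarrow> nat \<Rightarrow> nat \<Rightarrow> nat \<Rightarrow> nat" where
  "placement p q x y = (\<lambda>k. if k = x then p else if k = y then q else 0)"

definition off_diagonal :: "(nat \<times> nat) set" where
  "off_diagonal = {(x, y). x \<in> {1..4} \<and> y \<in> {1..4} \<and> x \<noteq> y}"

lemma pad4_two_parts: "pad4 [p, q] n = (if n = 1 then p else if n = 2 then q else 0)"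
  by (auto simp: pad4_def nth_Cons')

lemma rearrangement_as_placement:
  assumes s: "\<sigma> permutes {1..4}" and "\<sigma> x = 1" "\<sigma> y = 2" "x \<in> {1..4}" "y \<in> {1..4}"
  shows "(\<lambda>k. if k \<in> {1..4} then pad4 [p, q] (\<sigma> k) else 0) = placement p q x y"
proof
  fix k
  have "k \<noteq> x \<Longrightarrow> \<sigma> k \<noteq> 1" "k \<noteq> y \<Longrightarrow> \<sigma> k \<noteq> 2"
    using assms(2,3) permutes_inj[OF s] by (metis injD)+
  then show "(if k \<in> {1..4} then pad4 [p, q] (\<sigma> k) else 0) = placement p q x y k"
    using assms(2-5) by (auto simp: placement_def pad4_two_parts)
qed

lemma perm_sending_pair:
  assumes "(x, y) \<in> off_diagonal"
  obtains \<sigma> where "\<sigma> permutes {1..4}" "\<sigma> x = 1" "\<sigma> y = (2::nat)"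
proof
  define \<tau> where "\<tau> = transpose x (1::nat)"
  have x: "x \<in> {1..4}" and y: "y \<in> {1..4}" and xy: "x \<noteq> y"
    using assms by (auto simp: off_diagonal_def)
  have ty: "\<tau> y \<in> {1..4}" "\<tau> y \<noteq> 1"
    using x y xy by (auto simp: \<tau>_def transpose_def)
  have "\<tau> permutes {1..4}"
    unfolding \<tau>_def using x by (intro permutes_swap_id) auto
  then show "(transpose (\<tau> y) 2 \<circ> \<tau>) permutes {1..4}"
    using ty by (intro permutes_compose permutes_swap_id) auto
  show "(transpose (\<tau> y) 2 \<circ> \<tau>) x = 1" "(transpose (\<tau> y) 2 \<circ> \<tau>) y = 2"
    using ty by (simp_all add: \<tau>_def)
qed

lemma rearrangements_two_parts:
  "rearrangements [p, q] = (\<lambda>(x, y). placement p q x y) ` off_diagonal"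
proof (intro set_eqI iffI)
  fix a assume "a \<in> rearrangements [p, q]"
  then obtain \<sigma> where s: "\<sigma> permutes {1..4}"
    and a: "a = (\<lambda>k. if k \<in> {1..4} then pad4 [p, q] (\<sigma> k) else 0)"
    unfolding rearrangements_def by blast
  let ?x = "inv \<sigma> 1" and ?y = "inv \<sigma> 2"
  have "?x \<in> {1..4}" "?y \<in> {1..4}" "\<sigma> ?x = 1" "\<sigma> ?y = 2"
    using permutes_in_image[OF permutes_inv[OF s]] permutes_inverses(1)[OF s] by auto
  then show "a \<in> (\<lambda>(x, y). placement p q x y) ` off_diagonal"
    using rearrangement_as_placement[OF s] unfolding a off_diagonal_def
    by (intro image_eqI[of _ _ "(?x, ?y)"]) auto
next
  fix a assume "a \<in> (\<lambda>(x, y). placement p q x y) ` off_diagonal"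
  then obtain x y where xy: "(x, y) \<in> off_diagonal" and a: "a = placement p q x y" by auto
  obtain \<sigma> where s: "\<sigma> permutes {1..4}" "\<sigma> x = 1" "\<sigma> y = 2"
    using perm_sending_pair[OF xy] .
  moreover have "x \<in> {1..4}" "y \<in> {1..4}" using xy by (auto simp: off_diagonal_def)
  ultimately have "placement p q x y = (\<lambda>k. if k \<in> {1..4} then pad4 [p, q] (\<sigma> k) else 0)"
    by (simp only: rearrangement_as_placement)
  then have "\<forall>k. a k = (if k \<in> {1..4} then pad4 [p, q] (\<sigma> k) else 0)"
    by (simp add: a)
  then show "a \<in> rearrangements [p, q]"
    using s(1) unfolding rearrangements_def by blast
qed

lemma placement_inj:
  assumes "p \<noteq> q" "p > 0" "q > 0"
  shows "inj_on (\<lambda>(x, y). placement p q x y) off_diagonal"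
proof (rule inj_onI, clarify)
  fix x y x' y'
  assume "(x, y) \<in> off_diagonal" "(x', y') \<in> off_diagonal" and e: "placement p q x y = placement p q x' y'"
  then have "x \<noteq> y" "x' \<noteq> y'" by (auto simp: off_diagonal_def)
  then have "placement p q x' y' x = p" "placement p q x' y' y = q"
    using fun_cong[OF e, of x] fun_cong[OF e, of y] by (simp_all add: placement_def)
  then show "x = x' \<and> y = y'"
    using assms \<open>x \<noteq> y\<close> \<open>x' \<noteq> y'\<close> unfolding placement_def by (auto split: if_splits)
qed

(* The monomial symmetric polynomial m_(p,q) in four variables, for distinct parts p, q. *)
definition monomial_sym2 :: "nat \<Rightarrow> nat \<Rightarrow> (nat \<Rightarrow> real) \<Rightarrow> real" where
  "monomial_sym2 p q c = (\<Sum>(x, y)\<in>off_diagonal. c x ^ p * c y ^ q)"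

lemma prod_placement:
  assumes "(x, y) \<in> off_diagonal"
  shows "(\<Prod>k\<in>{1..4}. c k ^ placement p q x y k) = c x ^ p * c y ^ q"
proof -
  have x: "x \<in> {1..4}" and y: "y \<in> {1..4} - {x}" using assms by (auto simp: off_diagonal_def)
  have "(\<Prod>k\<in>{1..4}. c k ^ placement p q x y k)
      = c x ^ placement p q x y x * (\<Prod>k\<in>{1..4} - {x}. c k ^ placement p q x y k)"
    using x by (intro prod.remove) auto
  also have "(\<Prod>k\<in>{1..4} - {x}. c k ^ placement p q x y k) = (\<Prod>k\<in>{1..4} - {x}. if k = y then c y ^ q else 1)"
    by (intro prod.cong) (auto simp: placement_def)
  also have "\<dots> = c y ^ q"
    using y by (simp add: prod.delta')
  finally show ?thesis by (simp add: placement_def)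
qed

lemma m_JM_expansion:
  assumes "p \<noteq> q" "p > 0" "q > 0" and w: "w \<in> S4"
  shows "real_of_int (m_JM [p, q] w) = (\<Sum>t<10. monomial_sym2 p q (content t) * idem t w)"
proof -
  have "real_of_int (m_JM [p, q] w) = (\<Sum>a\<in>rearrangements [p, q]. to_real (JM_monomial a) w)"
    by (simp add: m_JM_def to_real_def)
  also have "\<dots> = (\<Sum>(x, y)\<in>off_diagonal. to_real (JM_monomial (placement p q x y)) w)"
    unfolding rearrangements_two_parts
    by (subst sum.reindex[OF placement_inj[OF assms(1-3)]]) (simp add: case_prod_beta')
  also have "\<dots> = (\<Sum>(x, y)\<in>off_diagonal. \<Sum>t<10. content t x ^ p * content t y ^ q * idem t w)"
  proof (rule sum.cong[OF refl], clarify)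
    fix x y assume xy: "(x, y) \<in> off_diagonal"
    show "to_real (JM_monomial (placement p q x y)) w
        = (\<Sum>t<10. content t x ^ p * content t y ^ q * idem t w)"
      unfolding JM_monomial_expansion[OF w] prod_placement[OF xy] ..
  qed
  also have "\<dots> = (\<Sum>t<10. monomial_sym2 p q (content t) * idem t w)"
    unfolding monomial_sym2_def sum_distrib_right case_prod_beta' by (rule sum.swap)
  finally show ?thesis .
qed

lemma off_diagonal_explicit:
  "off_diagonal = {(1,2), (1,3), (1,4), (2,1), (2,3), (2,4), (3,1), (3,2), (3,4), (4,1), (4,2), (4,3)}"
proof -
  have "{1..4::nat} = {1, 2, 3, 4}" by auto
  then show ?thesis unfolding off_diagonal_def by auto
qed

theorem proposition2p6:
  fixes i j :: nat
  assumes "i \<ge> 1" and "j \<ge> 1"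
  shows "(real_of_int (m_JM [i + j, i] id) =
           1/24 * (1 + (-1)^j) * (6^i * 3^j + 6^i * 2^j + 3^(i+j) + 3^i
             + (10 + 9 * (-1)^i) * (2^(i+j) + 2^i) + 22 * (-1)^i)) \<and>
      (real_of_int (m_JM [i + j, i] s1) =
           1/24 * (1 - (-1)^j) * (3^j * 6^i + 2^j * 6^i + 3^(i+j) + 3^i
             + (4 + 3 * (-1)^i) * 2^(i+j) + (4 - 3 * (-1)^i) * 2^i)) \<and>
      (real_of_int (m_JM [i + j, i] (s1 \<circ> s2)) =
           1/24 * (1 + (-1)^j) * (3^j * 6^i + 2^j * 6^i + 3^(i+j) + 3^i
             + 2^(i+j) + 2^i - 2 * (-1)^i)) \<and>
      (real_of_int (m_JM [i + j, i] (s1 \<circ> s3)) =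
           1/24 * (1 + (-1)^j) * (3^j * 6^i + 2^j * 6^i + 3^(i+j) + 3^i
             - (2 + 3 * (-1)^i) * (2^i + 2^(i+j)) - 2 * (-1)^i)) \<and>
      (real_of_int (m_JM [i + j, i] (s1 \<circ> s2 \<circ> s3)) =
           1/24 * (1 - (-1)^j) * (3^j * 6^i + 2^j * 6^i + 3^i + 3^(i+j)
             + 3 * (-1)^i * (2^i - 2^(i+j)) - 2 * (2^i + 2^(i+j))))"
proof -
  have S4: "id \<in> S4" "s1 \<in> S4" "s1 \<circ> s2 \<in> S4" "s1 \<circ> s3 \<in> S4" "s1 \<circ> s2 \<circ> s3 \<in> S4"
    by (auto simp: S4_def s1_def s2_def s3_def intro!: permutes_compose permutes_swap_id)
  have parts: "i + j \<noteq> i" "i + j > 0" "i > 0" using assms by auto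
  have six: "(6::real) ^ i = 2 ^ i * 3 ^ i" by (simp add: power_mult_distrib[symmetric])
  show ?thesis
    unfolding m_JM_expansion[OF parts S4(1)] m_JM_expansion[OF parts S4(2)] m_JM_expansion[OF parts S4(3)]
      m_JM_expansion[OF parts S4(4)] m_JM_expansion[OF parts S4(5)]
    apply (simp add: lessThan_nat_numeral)
    apply (simp add: monomial_sym2_def off_diagonal_explicit zero_power parts
        content_def content_table_def idem_def entry_at_def idempotent_table_def one_line_S4_def
        s1_def s2_def s3_def transpose_def)
    apply (cases "even i"; cases "even j")
    apply (simp_all add: power_add six field_simps)
    done
qed

end
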